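(* Let $q$ be a prime power, let $M$ be an invertible $s\times s$ matrix over $\mathbb{F}_q$, and let $1\le t_i\le t_o\le s$. Then the function $\mathbf{y}=\mathbf{x}M^{-1}$ (on row vectors in $\mathbb{F}_q^s$) defines a linear $(t_i,t_o,s,q)$-AONT if and only if every $t_o\times t_i$ submatrix of $M$ has rank $t_i$.
   Context: For a bijection $\phi:\Gamma^s\to\Gamma^s$ over an alphabet $\Gamma$ of size $v$, its array representation is the $v^s\times 2s$ array having, for each $\mathbf{x}=(x_1,\dots,x_s)\in\Gamma^s$, a row $(x_1,\dots,x_s,y_1,\dots,y_s)$ with $(y_1,\dots,y_s)=\phi(\mathbf{x})$. An $N\times k$ array is unbiased with respect to a set $D$ of columns if the rows restricted to $D$ contain every $|D|$-tuple over $\Gamma$ exactly $N/v^{|D|}$ times. $\phi$ is a $(t_i,t_o,s,v)$-AONT if its array representation (columns labelled $1,\dots,2s$) is unbiased with respect to $\{1,\dots,s\}$, $\{s+1,\dots,2s\}$, and $I\cup J$ for every $I\subseteq\{1,\dots,s\}$ with $|I|=t_i$ and every $J\subseteq\{s+1,\dots,2s\}$ with $|J|=s-t_o$. A linear $(t_i,t_o,s,q)$-AONT is one over $\Gamma=\mathbb{F}_q$ of the form $\mathbf{x}\mapsto\mathbf{x}M^{-1}$ for an invertible $s\times s$ matrix $M$ over $\mathbb{F}_q$ (so that $\mathbf{x}=\mathbf{y}M$). *)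

theory Defs
  imports "Jordan_Normal_Form.DL_Rank" "Jordan_Normal_Form.DL_Submatrix"
    "Jordan_Normal_Form.Gauss_Jordan_Elimination"
begin

definition vec_mat :: "'a::semiring_0 vec \<Rightarrow> 'a mat \<Rightarrow> 'a vec" where
  "vec_mat x A = vec (dim_col A) (\<lambda>j. x \<bullet> col A j)"

(* Entry in column c (0-based, columns 0..2s-1) of the row of the array
   representation of phi indexed by x: first s columns are x, last s are phi x. *)
definition array_entry :: "nat \<Rightarrow> ('a vec \<Rightarrow> 'a vec) \<Rightarrow> 'a vec \<Rightarrow> nat \<Rightarrow> 'a" where
  "array_entry s \<phi> x c = (if c < s then x $ c else \<phi> x $ (c - s))"

(* The v^s x 2s array representation (alphabet = UNIV of the finite type 'a)
   is unbiased w.r.t. the column set D: every |D|-tuple over 'a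
   (a function u on D) occurs exactly N / v^|D| times, N = v^s. *)
definition unbiased :: "nat \<Rightarrow> ('a::finite vec \<Rightarrow> 'a vec) \<Rightarrow> nat set \<Rightarrow> bool" where
  "unbiased s \<phi> D \<longleftrightarrow>
     (\<forall>u :: nat \<Rightarrow> 'a.
        card {x \<in> carrier_vec s. \<forall>c\<in>D. array_entry s \<phi> x c = u c} * card (UNIV :: 'a set) ^ card D
          = card (UNIV :: 'a set) ^ s)"

definition AONT :: "nat \<Rightarrow> nat \<Rightarrow> nat \<Rightarrow> ('a::finite vec \<Rightarrow> 'a vec) \<Rightarrow> bool" where
  "AONT ti to s \<phi> \<longleftrightarrow>
     bij_betw \<phi> (carrier_vec s) (carrier_vec s) \<and>
     unbiased s \<phi> {0..<s} \<and> unbiased s \<phi> {s..<2*s} \<and>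
     (\<forall>I J. I \<subseteq> {0..<s} \<longrightarrow> card I = ti \<longrightarrow> J \<subseteq> {s..<2*s} \<longrightarrow> card J = s - to \<longrightarrow>
        unbiased s \<phi> (I \<union> J))"

definition linear_aont_map :: "'a::field mat \<Rightarrow> 'a vec \<Rightarrow> 'a vec" where
  "linear_aont_map M x = vec_mat x (the (mat_inverse M))"

end

theory Submission
  imports Defs
begin

text \<open>
  The rows of the array of \<open>\<phi>(x) = x M\<^sup>-\<^sup>1\<close> are the vectors \<open>(y M, y)\<close>, so reading a row on a
  column set \<open>D\<close> is a linear map of \<open>y\<close>. Its fibres are cosets of its kernel, hence all have
  the same size, and the array is unbiased on \<open>D\<close> iff this map is onto. For \<open>D = I \<union> J\<close>,
  subtracting a vector that matches the prescribed outputs on \<open>J\<close> shows that this holds iff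
  every value of \<open>(z M)\<^sub>I\<close> is attained by some \<open>z\<close> vanishing on the output positions in \<open>J\<close>,
  i.e. iff \<open>z \<mapsto> z M[R, I]\<close> is onto, \<open>R\<close> being the complementary \<open>t\<^sub>o\<close> positions. Finally a
  matrix acts surjectively on row vectors iff its kernel is trivial iff it has full column rank.
\<close>

lemma index_vec_mat [simp]: "j < dim_col A \<Longrightarrow> vec_mat x A $ j = x \<bullet> col A j"
  unfolding vec_mat_def by simp

lemma vec_mat_carrier [simp]: "vec_mat x A \<in> carrier_vec (dim_col A)"
  unfolding vec_mat_def by simp

lemma dim_vec_mat [simp]: "dim_vec (vec_mat x A) = dim_col A"
  unfolding vec_mat_def by simp

lemma vec_mat_scalar_prod:
  assumes "x \<in> carrier_vec m" "A \<in> carrier_mat m n" "v \<in> carrier_vec n"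
  shows "vec_mat x A \<bullet> v = x \<bullet> (A *\<^sub>v v)"
  using assoc_scalar_prod[OF assms] assms(2) by (simp add: vec_mat_def mult_mat_vec_def)

lemma vec_mat_mult:
  assumes "x \<in> carrier_vec m" "A \<in> carrier_mat m n" "B \<in> carrier_mat n k"
  shows "vec_mat (vec_mat x A) B = vec_mat x (A * B)"
  by (rule eq_vecI) (use assms in \<open>auto simp: vec_mat_scalar_prod mult_mat_vec_def\<close>)

lemma vec_mat_one: "(x :: 'a::semiring_1 vec) \<in> carrier_vec n \<Longrightarrow> vec_mat x (1\<^sub>m n) = x"
  by (rule eq_vecI) auto

lemma vec_mat_add:
  assumes "x \<in> carrier_vec (dim_row A)" "y \<in> carrier_vec (dim_row A)"
  shows "vec_mat (x + y) A = vec_mat x A + vec_mat y A"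
  using assms by (auto simp: vec_mat_def add_scalar_prod_distrib[of _ "dim_row A"])

section \<open>Full column rank, trivial kernel and surjectivity on row vectors\<close>

lemma kernel_trivial_if_vec_mat_surjective:
  fixes A :: "'a::comm_ring_1 mat"
  assumes A: "A \<in> carrier_mat m n"
    and onto: "\<forall>w\<in>carrier_vec n. \<exists>u\<in>carrier_vec m. vec_mat u A = w"
    and v: "v \<in> carrier_vec n" and Av: "A *\<^sub>v v = 0\<^sub>v m"
  shows "v = 0\<^sub>v n"
proof (rule eq_vecI)
  fix j assume "j < dim_vec (0\<^sub>v n :: 'a vec)"
  then have j: "j < n" by simp
  obtain u where u: "u \<in> carrier_vec m" "vec_mat u A = unit_vec n j"
    using onto by (meson unit_vec_carrier)
  have "v $ j = vec_mat u A \<bullet> v" using u(2) v j by simp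
  also have "\<dots> = u \<bullet> (A *\<^sub>v v)" by (rule vec_mat_scalar_prod[OF u(1) A v])
  also have "\<dots> = 0" using Av u(1) by simp
  finally show "v $ j = 0\<^sub>v n $ j" using j by simp
qed (use v in simp)

lemma vec_mat_onto_if_every_column_pivot:
  fixes E :: "'a::semiring_1 mat"
  assumes E: "E \<in> carrier_mat m n" and f: "pivot_fun E f n"
    and pivot_row: "\<And>j. j < n \<Longrightarrow> \<exists>i<m. f i = j" and w: "w \<in> carrier_vec n"
  shows "vec_mat (vec m (\<lambda>i. if f i < n then w $ f i else 0)) E = w"
proof (rule eq_vecI)
  note piv = pivot_funD[OF carrier_matD(1)[OF E] f]
  let ?u = "vec m (\<lambda>i. if f i < n then w $ f i else 0)"
  fix j assume "j < dim_vec w"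
  then have j: "j < n" using w by simp
  then obtain i where i: "i < m" "f i = j" using pivot_row by blast
  \<comment> \<open>column \<open>j\<close> of \<open>E\<close> is the unit vector at its pivot row \<open>i\<close>\<close>
  have "vec_mat ?u E $ j = (\<Sum>i'\<in>{0..<m}. ?u $ i' * E $$ (i', j))"
    using E j by (simp add: scalar_prod_def)
  also have "\<dots> = (\<Sum>i'\<in>{i}. ?u $ i' * E $$ (i', j))"
    using i j piv(5)[of i] by (intro sum.mono_neutral_right) auto
  also have "\<dots> = w $ j"
    using i j piv(4)[of i] by simp
  finally show "vec_mat ?u E $ j = w $ j" .
qed (use E w in auto)

lemma vec_mat_surjective_if_kernel_trivial:
  fixes A :: "'a::field mat"
  assumes A: "A \<in> carrier_mat m n"
    and ker: "\<forall>v\<in>carrier_vec n. A *\<^sub>v v = 0\<^sub>v m \<longrightarrow> v = 0\<^sub>v n"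
    and w: "w \<in> carrier_vec n"
  shows "\<exists>u\<in>carrier_vec m. vec_mat u A = w"
proof -
  define E where "E = gauss_jordan_single A"
  note gj = gauss_jordan_single[OF A E_def[symmetric]]
  obtain P where P: "P \<in> carrier_mat m m" "E = P * A"
    using gj(4) by auto
  obtain f where f: "pivot_fun E f n"
    using gj(2,3) unfolding row_echelon_form_def by auto
  \<comment> \<open>a column without pivot would yield a nonzero kernel vector of \<open>E\<close>, hence of \<open>A\<close>\<close>
  have pivot_row: "\<exists>i<m. f i = j" if "j < n" for j
  proof (rule ccontr)
    assume "\<not> (\<exists>i<m. f i = j)"
    then have "j \<notin> snd ` set (pivot_positions E)"
      by (auto simp: pivot_positions(1)[OF gj(2) f])
    then have "snd ` set (pivot_positions E) \<noteq> {0..<n}"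
      using that by auto
    then show False
      using find_base_vector[OF gj(3,2)] ker gj(1) by blast
  qed
  define u where "u = vec m (\<lambda>i. if f i < n then w $ f i else 0)"
  have "vec_mat (vec_mat u P) A = vec_mat u E"
    using P A by (simp add: vec_mat_mult u_def)
  also have "\<dots> = w"
    unfolding u_def by (rule vec_mat_onto_if_every_column_pivot[OF gj(2) f pivot_row w])
  finally show ?thesis
    using P(1) by (intro bexI[of _ "vec_mat u P"]) auto
qed

lemma vec_mat_surjective_iff_kernel_trivial:
  fixes A :: "'a::field mat"
  assumes "A \<in> carrier_mat m n"
  shows "(\<forall>w\<in>carrier_vec n. \<exists>u\<in>carrier_vec m. vec_mat u A = w)
    \<longleftrightarrow> (\<forall>v\<in>carrier_vec n. A *\<^sub>v v = 0\<^sub>v m \<longrightarrow> v = 0\<^sub>v n)"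
  using kernel_trivial_if_vec_mat_surjective[OF assms]
    vec_mat_surjective_if_kernel_trivial[OF assms] by blast

lemma (in vec_space) non_distinct_cols_low_rank:
  assumes A: "A \<in> carrier_mat n nc" and "\<not> distinct (cols A)"
  shows "rank A < nc"
proof -
  obtain S where S: "maximal S (\<lambda>T. T \<subseteq> set (cols A) \<and> lin_indpt T)"
    using maximal_exists[of "\<lambda>T. T \<subseteq> set (cols A) \<and> lin_indpt T" "card (set (cols A))" "{}"]
    by (meson List.finite_set card_mono empty_iff empty_subsetI finite_lin_indpt2 rev_finite_subset)
  then have "card S \<le> card (set (cols A))" by (simp add: card_mono maximal_def)
  also have "\<dots> < length (cols A)"
    using assms(2) card_length card_distinct le_neq_implies_less by blast
  finally show ?thesis using rank_card_indpt[OF A S] A by simp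
qed

lemma distinct_cols_if_kernel_trivial:
  fixes A :: "'a::comm_ring_1 mat"
  assumes A: "A \<in> carrier_mat m n"
    and ker: "\<forall>v\<in>carrier_vec n. A *\<^sub>v v = 0\<^sub>v m \<longrightarrow> v = 0\<^sub>v n"
  shows "distinct (cols A)"
proof (rule ccontr)
  assume "\<not> distinct (cols A)"
  then obtain a b where ab: "a < n" "b < n" "a \<noteq> b" "col A a = col A b"
    using A by (auto simp: distinct_conv_nth)
  have col_unit: "A *\<^sub>v unit_vec n j = col A j" if "j < n" for j
    by (rule eq_vecI) (use A that in auto)
  let ?v = "unit_vec n a - unit_vec n b :: 'a vec"
  have "A *\<^sub>v ?v = col A a - col A b"
    using A ab by (simp add: mult_minus_distrib_mat_vec[OF A] col_unit)
  also have "\<dots> = 0\<^sub>v m"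
    using ab(4) col_dim[of A b] carrier_matD(1)[OF A] by simp
  finally have "?v = 0\<^sub>v n" using ker by simp
  then have "?v $ a = 0" using ab(1) by simp
  then show False using ab by simp
qed

lemma rank_eq_dim_col_iff_kernel_trivial:
  fixes A :: "'a::field mat"
  assumes A: "A \<in> carrier_mat m n"
  shows "vec_space.rank m A = n \<longleftrightarrow> (\<forall>v\<in>carrier_vec n. A *\<^sub>v v = 0\<^sub>v m \<longrightarrow> v = 0\<^sub>v n)"
proof
  assume rank: "vec_space.rank m A = n"
  then have distinct: "distinct (cols A)"
    using vec_space.non_distinct_cols_low_rank[OF A] by fastforce
  show "\<forall>v\<in>carrier_vec n. A *\<^sub>v v = 0\<^sub>v m \<longrightarrow> v = 0\<^sub>v n"
    using vec_space.full_rank_lin_indpt[OF A rank distinct] vec_space.lin_depI[OF A _ _ _ distinct]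
    by blast
next
  assume ker: "\<forall>v\<in>carrier_vec n. A *\<^sub>v v = 0\<^sub>v m \<longrightarrow> v = 0\<^sub>v n"
  have distinct: "distinct (cols A)" by (rule distinct_cols_if_kernel_trivial[OF A ker])
  then have "module.lin_indpt class_ring (module_vec TYPE('a) m) (set (cols A))"
    using vec_space.lin_depE[OF A _ distinct] ker by metis
  then show "vec_space.rank m A = n" using vec_space.lin_indpt_full_rank[OF A distinct] by blast
qed

section \<open>Submatrices\<close>

lemma bij_betw_pick:
  assumes "finite R"
  shows "bij_betw (pick R) {..<card R} R"
proof (rule bij_betw_byWitness[where f' = "\<lambda>r. card {a\<in>R. a < r}"])
  show "\<forall>a\<in>{..<card R}. card {r\<in>R. r < pick R a} = a" using card_pick_le by auto
  show "\<forall>r\<in>R. pick R (card {a\<in>R. a < r}) = r" using pick_card_in_set by auto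
  show "pick R ` {..<card R} \<subseteq> R" using pick_in_set_le by auto
  show "(\<lambda>r. card {a\<in>R. a < r}) ` R \<subseteq> {..<card R}"
    using assms by (auto intro!: psubset_card_mono)
qed

lemma submatrix_carrier_mat:
  assumes "A \<in> carrier_mat m n" "R \<subseteq> {0..<m}" "C \<subseteq> {0..<n}"
  shows "submatrix A R C \<in> carrier_mat (card R) (card C)"
proof -
  have "dim_row A = m" "dim_col A = n" using assms(1) by auto
  moreover have "{i. i < m \<and> i \<in> R} = R" "{j. j < n \<and> j \<in> C} = C" using assms(2,3) by auto
  ultimately show ?thesis by (intro carrier_matI) (simp_all only: dim_submatrix)
qed

lemma vec_mat_submatrix:
  fixes A :: "'a::comm_semiring_0 mat"
  assumes A: "A \<in> carrier_mat m n" and R: "R \<subseteq> {0..<m}" and C: "C \<subseteq> {0..<n}"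
    and z: "z \<in> carrier_vec m" and supp: "\<forall>j<m. j \<notin> R \<longrightarrow> z $ j = 0" and b: "b < card C"
  shows "vec_mat (vec (card R) (\<lambda>a. z $ pick R a)) (submatrix A R C) $ b = vec_mat z A $ pick C b"
proof -
  have rows: "{i. i < m \<and> i \<in> R} = R" and cols: "{j. j < n \<and> j \<in> C} = C"
    using R C by auto
  have c: "pick C b < n" using pick_in_set_le[OF b] C by auto
  have "vec_mat z A $ pick C b = (\<Sum>j\<in>{0..<m}. z $ j * A $$ (j, pick C b))"
    using A z c by (simp add: scalar_prod_def)
  also have "\<dots> = (\<Sum>j\<in>R. z $ j * A $$ (j, pick C b))"
    using supp R by (intro sum.mono_neutral_right) auto
  also have "\<dots> = (\<Sum>a<card R. z $ pick R a * A $$ (pick R a, pick C b))"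
    using sum.reindex_bij_betw[OF bij_betw_pick, of R "\<lambda>j. z $ j * A $$ (j, pick C b)"] R
    by (simp add: finite_subset)
  also have "\<dots> = vec_mat (vec (card R) (\<lambda>a. z $ pick R a)) (submatrix A R C) $ b"
    using A b submatrix_carrier_mat[OF A R C]
    by (simp add: scalar_prod_def submatrix_index rows cols lessThan_atLeast0)
  finally show ?thesis by simp
qed

lemma vec_mat_supported_onto_if_submatrix_onto:
  fixes A :: "'a::comm_semiring_0 mat"
  assumes A: "A \<in> carrier_mat m n" and R: "R \<subseteq> {0..<m}" and C: "C \<subseteq> {0..<n}"
    and onto: "\<forall>w\<in>carrier_vec (card C). \<exists>z\<in>carrier_vec (card R). vec_mat z (submatrix A R C) = w"
  shows "\<exists>z\<in>carrier_vec m. (\<forall>j<m. j \<notin> R \<longrightarrow> z $ j = 0) \<and> (\<forall>i\<in>C. vec_mat z A $ i = w i)"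
proof -
  obtain z' where z': "z' \<in> carrier_vec (card R)"
    "vec_mat z' (submatrix A R C) = vec (card C) (\<lambda>b. w (pick C b))"
    using onto by (meson vec_carrier)
  define z where "z = vec m (\<lambda>j. if j \<in> R then z' $ card {r\<in>R. r < j} else 0)"
  have z: "z \<in> carrier_vec m" "\<forall>j<m. j \<notin> R \<longrightarrow> z $ j = 0" unfolding z_def by simp_all
  have z_pick: "vec (card R) (\<lambda>a. z $ pick R a) = z'"
  proof (rule eq_vecI)
    fix a assume "a < dim_vec z'"
    then have a: "a < card R" using z' by simp
    then have "pick R a \<in> R" by (rule pick_in_set_le)
    then show "vec (card R) (\<lambda>a. z $ pick R a) $ a = z' $ a"
      using a R card_pick_le[OF a] by (auto simp: z_def)
  qed (use z' in simp)
  have "vec_mat z A $ i = w i" if i: "i \<in> C" for i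
  proof -
    define b where "b = card {c\<in>C. c < i}"
    have b: "b < card C"
      unfolding b_def using i C by (intro psubset_card_mono) (auto simp: finite_subset)
    have pick_b: "pick C b = i" unfolding b_def by (rule pick_card_in_set[OF i])
    have "vec_mat z A $ i = vec_mat z' (submatrix A R C) $ b"
      using vec_mat_submatrix[OF A R C z b] z_pick pick_b by simp
    also have "\<dots> = w i" using z'(2) b pick_b by simp
    finally show ?thesis .
  qed
  then show ?thesis using z by blast
qed

lemma submatrix_onto_if_vec_mat_supported_onto:
  fixes A :: "'a::comm_semiring_0 mat"
  assumes A: "A \<in> carrier_mat m n" and R: "R \<subseteq> {0..<m}" and C: "C \<subseteq> {0..<n}"
    and onto: "\<forall>w. \<exists>z\<in>carrier_vec m. (\<forall>j<m. j \<notin> R \<longrightarrow> z $ j = 0) \<and> (\<forall>i\<in>C. vec_mat z A $ i = w i)"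
    and w: "w \<in> carrier_vec (card C)"
  shows "\<exists>z\<in>carrier_vec (card R). vec_mat z (submatrix A R C) = w"
proof -
  obtain z where z: "z \<in> carrier_vec m" "\<forall>j<m. j \<notin> R \<longrightarrow> z $ j = 0"
    "\<forall>i\<in>C. vec_mat z A $ i = w $ card {c\<in>C. c < i}"
    using onto by meson
  have "vec_mat (vec (card R) (\<lambda>a. z $ pick R a)) (submatrix A R C) = w"
  proof (rule eq_vecI)
    fix b assume "b < dim_vec w"
    then have b: "b < card C" using w by simp
    then show "vec_mat (vec (card R) (\<lambda>a. z $ pick R a)) (submatrix A R C) $ b = w $ b"
      using vec_mat_submatrix[OF A R C z(1,2) b] z(3) pick_in_set_le[OF b] card_pick_le[OF b]
      by simp
  qed (use w submatrix_carrier_mat[OF A R C] in simp)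
  then show ?thesis by auto
qed

lemma vec_mat_submatrix_surjective_iff:
  fixes A :: "'a::comm_semiring_0 mat"
  assumes "A \<in> carrier_mat m n" "R \<subseteq> {0..<m}" "C \<subseteq> {0..<n}"
  shows "(\<forall>w\<in>carrier_vec (card C). \<exists>z\<in>carrier_vec (card R). vec_mat z (submatrix A R C) = w)
    \<longleftrightarrow> (\<forall>w. \<exists>z\<in>carrier_vec m. (\<forall>j<m. j \<notin> R \<longrightarrow> z $ j = 0) \<and> (\<forall>i\<in>C. vec_mat z A $ i = w i))"
  using vec_mat_supported_onto_if_submatrix_onto[OF assms]
    submatrix_onto_if_vec_mat_supported_onto[OF assms] by blast

section \<open>Unbiasedness of additive maps\<close>

lemma card_carrier_vec: "card (carrier_vec n :: 'a::finite vec set) = card (UNIV :: 'a set) ^ n"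
proof -
  have "bij_betw list_of_vec (carrier_vec n) {xs :: 'a list. set xs \<subseteq> UNIV \<and> length xs = n}"
    by (rule bij_betw_byWitness[where f' = vec_of_list]) (auto simp: vec_list list_vec intro: carrier_vecI)
  then have "card (carrier_vec n :: 'a vec set) = card {xs :: 'a list. set xs \<subseteq> UNIV \<and> length xs = n}"
    by (rule bij_betw_same_card)
  also have "\<dots> = card (UNIV :: 'a set) ^ n" by (rule card_lists_length_eq) simp
  finally show ?thesis .
qed

lemma finite_carrier_vec: "finite (carrier_vec n :: 'a::finite vec set)"
  by (rule card_ge_0_finite) (simp add: card_carrier_vec finite_UNIV_card_ge_0)

definition array_fibre :: "nat \<Rightarrow> ('a vec \<Rightarrow> 'a vec) \<Rightarrow> nat set \<Rightarrow> (nat \<Rightarrow> 'a) \<Rightarrow> 'a vec set" where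
  "array_fibre s \<phi> D u = {x \<in> carrier_vec s. \<forall>c\<in>D. array_entry s \<phi> x c = u c}"

lemma unbiased_iff_card_array_fibre:
  fixes \<phi> :: "'a::finite vec \<Rightarrow> 'a vec"
  shows "unbiased s \<phi> D \<longleftrightarrow>
    (\<forall>u. card (array_fibre s \<phi> D u) * card (UNIV :: 'a set) ^ card D = card (UNIV :: 'a set) ^ s)"
  unfolding unbiased_def array_fibre_def ..

lemma card_array_fibre_eq:
  fixes \<phi> :: "'a::ab_group_add vec \<Rightarrow> 'a vec"
  assumes additive: "\<And>x y c. x \<in> carrier_vec s \<Longrightarrow> y \<in> carrier_vec s \<Longrightarrow> c \<in> D \<Longrightarrow>
      array_entry s \<phi> (x + y) c = array_entry s \<phi> x c + array_entry s \<phi> y c"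
    and x: "x \<in> array_fibre s \<phi> D u"
  shows "card (array_fibre s \<phi> D u) = card (array_fibre s \<phi> D (\<lambda>_. 0))"
proof -
  have "array_fibre s \<phi> D u = (\<lambda>y. y + x) ` array_fibre s \<phi> D (\<lambda>_. 0)"
  proof (intro equalityI subsetI)
    fix x' assume x': "x' \<in> array_fibre s \<phi> D u"
    have "x' = (x' - x) + x" using x x' by (auto simp: array_fibre_def intro!: eq_vecI)
    moreover have "x' - x \<in> array_fibre s \<phi> D (\<lambda>_. 0)"
      using x x' additive[of "x' - x" x] calculation by (auto simp: array_fibre_def)
    ultimately show "x' \<in> (\<lambda>y. y + x) ` array_fibre s \<phi> D (\<lambda>_. 0)" by (rule image_eqI)
  qed (use x additive in \<open>auto simp: array_fibre_def\<close>)
  moreover have "inj_on (\<lambda>y. y + x) (array_fibre s \<phi> D (\<lambda>_. 0))"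
  proof (rule inj_onI)
    fix y y' assume y: "y \<in> array_fibre s \<phi> D (\<lambda>_. 0)" "y' \<in> array_fibre s \<phi> D (\<lambda>_. 0)"
      and eq: "y + x = y' + x"
    have "y = (y + x) - x" "y' = (y' + x) - x"
      using x y by (auto simp: array_fibre_def intro!: eq_vecI)
    then show "y = y'" using eq by metis
  qed
  ultimately show ?thesis by (metis card_image)
qed

lemma sum_card_array_fibre:
  fixes \<phi> :: "'a::finite vec \<Rightarrow> 'a vec"
  assumes D: "finite D"
  shows "(\<Sum>u\<in>PiE D (\<lambda>_. UNIV). card (array_fibre s \<phi> D u)) = card (UNIV :: 'a set) ^ s"
proof -
  let ?values = "PiE D (\<lambda>_. UNIV :: 'a set)"
  have partition: "carrier_vec s = (\<Union>u\<in>?values. array_fibre s \<phi> D u)"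
  proof (intro equalityI subsetI)
    fix x :: "'a vec" assume "x \<in> carrier_vec s"
    then have "x \<in> array_fibre s \<phi> D (restrict (array_entry s \<phi> x) D)"
      by (simp add: array_fibre_def)
    then show "x \<in> (\<Union>u\<in>?values. array_fibre s \<phi> D u)"
      by (intro UN_I[of "restrict (array_entry s \<phi> x) D"]) auto
  qed (unfold array_fibre_def, blast)
  have disjoint: "array_fibre s \<phi> D u \<inter> array_fibre s \<phi> D v = {}"
    if uv: "u \<in> ?values" "v \<in> ?values" "u \<noteq> v" for u v
  proof -
    obtain c where "c \<in> D" "u c \<noteq> v c" using PiE_ext[OF uv(1,2)] uv(3) by blast
    then show ?thesis unfolding array_fibre_def disjoint_iff by fastforce
  qed
  have finite_fibre: "finite (array_fibre s \<phi> D u)" for u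
    unfolding array_fibre_def by (rule finite_subset[OF _ finite_carrier_vec]) auto
  have "finite ?values" using D by (simp add: finite_PiE)
  have "card (UNIV :: 'a set) ^ s = card (\<Union>u\<in>?values. array_fibre s \<phi> D u)"
    by (simp only: card_carrier_vec[symmetric] partition[symmetric])
  also have "\<dots> = (\<Sum>u\<in>?values. card (array_fibre s \<phi> D u))"
    by (rule card_UN_disjoint) (use \<open>finite ?values\<close> finite_fibre disjoint in blast)+
  finally show ?thesis by (rule sym)
qed

lemma unbiased_iff_surjective:
  fixes \<phi> :: "'a::{finite,ab_group_add} vec \<Rightarrow> 'a vec"
  assumes additive: "\<And>x y c. x \<in> carrier_vec s \<Longrightarrow> y \<in> carrier_vec s \<Longrightarrow> c \<in> D \<Longrightarrow>
      array_entry s \<phi> (x + y) c = array_entry s \<phi> x c + array_entry s \<phi> y c"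
    and D: "finite D"
  shows "unbiased s \<phi> D \<longleftrightarrow> (\<forall>u. \<exists>x\<in>carrier_vec s. \<forall>c\<in>D. array_entry s \<phi> x c = u c)"
proof
  assume "unbiased s \<phi> D"
  then have "card (array_fibre s \<phi> D u) * card (UNIV :: 'a set) ^ card D = card (UNIV :: 'a set) ^ s"
    for u
    unfolding unbiased_iff_card_array_fibre by blast
  moreover have "card (UNIV :: 'a set) ^ s \<noteq> 0" by (simp add: finite_UNIV_card_ge_0)
  ultimately have "array_fibre s \<phi> D u \<noteq> {}" for u by (metis card.empty mult_zero_left)
  then show "\<forall>u. \<exists>x\<in>carrier_vec s. \<forall>c\<in>D. array_entry s \<phi> x c = u c"
    unfolding array_fibre_def by blast
next
  assume onto: "\<forall>u. \<exists>x\<in>carrier_vec s. \<forall>c\<in>D. array_entry s \<phi> x c = u c"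
  have equal_cards: "card (array_fibre s \<phi> D u) = card (array_fibre s \<phi> D (\<lambda>_. 0))" for u
  proof -
    obtain x where "x \<in> array_fibre s \<phi> D u" using onto unfolding array_fibre_def by blast
    then show ?thesis using card_array_fibre_eq[of s D \<phi>] additive by blast
  qed
  have "card (UNIV :: 'a set) ^ s = (\<Sum>u\<in>PiE D (\<lambda>_. UNIV). card (array_fibre s \<phi> D u))"
    using sum_card_array_fibre[OF D] by (rule sym)
  also have "\<dots> = (\<Sum>u\<in>PiE D (\<lambda>_. UNIV :: 'a set). card (array_fibre s \<phi> D (\<lambda>_. 0)))"
    by (intro sum.cong refl equal_cards)
  also have "\<dots> = card (UNIV :: 'a set) ^ card D * card (array_fibre s \<phi> D (\<lambda>_. 0))"
    using D by (simp add: card_PiE)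
  finally have "card (array_fibre s \<phi> D u) * card (UNIV :: 'a set) ^ card D = card (UNIV :: 'a set) ^ s"
    for u
    using equal_cards[of u] by simp
  then show "unbiased s \<phi> D" unfolding unbiased_iff_card_array_fibre by blast
qed

section \<open>Linear AONTs\<close>

lemma the_mat_inverse:
  fixes M :: "'a::field mat"
  assumes M: "M \<in> carrier_mat n n" and "invertible_mat M"
  shows "the (mat_inverse M) \<in> carrier_mat n n" "M * the (mat_inverse M) = 1\<^sub>m n"
    "the (mat_inverse M) * M = 1\<^sub>m n"
proof -
  obtain B where B: "M * B = 1\<^sub>m (dim_row M)" "B * M = 1\<^sub>m (dim_row B)"
    using assms(2) unfolding invertible_mat_def inverts_mat_def by auto
  have "B \<in> carrier_mat n n"
    using B M by (metis carrier_matD carrier_matI index_mult_mat(2,3) index_one_mat(2,3))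
  then have "M \<in> Units (ring_mat TYPE('a) n undefined)"
    using B M unfolding Units_def ring_mat_def by auto
  then obtain C where "mat_inverse M = Some C"
    using mat_inverse(1)[OF M] by fastforce
  then show "the (mat_inverse M) \<in> carrier_mat n n" "M * the (mat_inverse M) = 1\<^sub>m n"
    "the (mat_inverse M) * M = 1\<^sub>m n"
    using mat_inverse(2)[OF M] by auto
qed

definition hidden_outputs :: "nat \<Rightarrow> nat set \<Rightarrow> nat set" where
  "hidden_outputs s J = {0..<s} - (\<lambda>c. c - s) ` J"

lemma card_hidden_outputs:
  assumes "J \<subseteq> {s..<2*s}"
  shows "card (hidden_outputs s J) = s - card J"
proof -
  have "inj_on (\<lambda>c. c - s) J" using assms by (intro inj_on_diff_nat) auto
  moreover have "(\<lambda>c. c - s) ` J \<subseteq> {0..<s}"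
  proof (rule image_subsetI)
    fix c assume "c \<in> J"
    then have "c < 2 * s" using assms by auto
    then have "c - s < s" by linarith
    then show "c - s \<in> {0..<s}" by simp
  qed
  ultimately show ?thesis
    unfolding hidden_outputs_def by (simp add: card_Diff_subset card_image finite_subset)
qed

lemma hidden_outputs_shift_complement:
  assumes "R \<subseteq> {0..<s}"
  shows "hidden_outputs s ((\<lambda>j. j + s) ` ({0..<s} - R)) = R"
  using assms unfolding hidden_outputs_def image_image by auto

lemma not_in_hidden_outputs_iff:
  assumes "J \<subseteq> {s..<2*s}"
  shows "j < s \<and> j \<notin> hidden_outputs s J \<longleftrightarrow> j + s \<in> J"
  using assms by (force simp: hidden_outputs_def)

lemma all_hidden_outputs_iff:
  assumes "t \<le> s"
  shows "(\<forall>J. J \<subseteq> {s..<2*s} \<longrightarrow> card J = s - t \<longrightarrow> P (hidden_outputs s J))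
    \<longleftrightarrow> (\<forall>R. R \<subseteq> {0..<s} \<longrightarrow> card R = t \<longrightarrow> P R)"
proof (intro iffI allI impI)
  fix R assume all_J: "\<forall>J. J \<subseteq> {s..<2*s} \<longrightarrow> card J = s - t \<longrightarrow> P (hidden_outputs s J)"
    and R: "R \<subseteq> {0..<s}" "card R = t"
  define J where "J = (\<lambda>j. j + s) ` ({0..<s} - R)"
  have "card J = s - t"
    unfolding J_def using R by (simp add: card_image card_Diff_subset finite_subset)
  moreover have "J \<subseteq> {s..<2*s}" unfolding J_def by auto
  ultimately show "P R"
    using all_J hidden_outputs_shift_complement[OF R(1)] unfolding J_def by metis
next
  fix J assume all_R: "\<forall>R. R \<subseteq> {0..<s} \<longrightarrow> card R = t \<longrightarrow> P R"
    and J: "J \<subseteq> {s..<2*s}" "card J = s - t"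
  have "hidden_outputs s J \<subseteq> {0..<s}" unfolding hidden_outputs_def by blast
  then show "P (hidden_outputs s J)"
    using all_R card_hidden_outputs[OF J(1)] J(2) assms by simp
qed

locale linear_aont =
  fixes M :: "'a::{finite,field} mat" and s :: nat
  assumes M_carrier: "M \<in> carrier_mat s s" and M_invertible: "invertible_mat M"
begin

lemmas M_inverse = the_mat_inverse[OF M_carrier M_invertible]

lemma linear_aont_map_carrier: "linear_aont_map M x \<in> carrier_vec s"
  using M_inverse(1) vec_mat_carrier[of x "the (mat_inverse M)"]
  by (simp add: linear_aont_map_def)

lemma vec_mat_linear_aont_map: "x \<in> carrier_vec s \<Longrightarrow> vec_mat (linear_aont_map M x) M = x"
  using M_inverse M_carrier by (simp add: linear_aont_map_def vec_mat_mult[of x s _ s M s] vec_mat_one)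

lemma linear_aont_map_vec_mat: "y \<in> carrier_vec s \<Longrightarrow> linear_aont_map M (vec_mat y M) = y"
  using M_inverse M_carrier by (simp add: linear_aont_map_def vec_mat_mult[of y s M s _ s] vec_mat_one)

lemma vec_mat_M_carrier: "vec_mat y M \<in> carrier_vec s"
  using M_carrier vec_mat_carrier[of y M] by simp

lemma bij_betw_linear_aont_map: "bij_betw (linear_aont_map M) (carrier_vec s) (carrier_vec s)"
  by (rule bij_betw_byWitness[where f' = "\<lambda>y. vec_mat y M"])
    (auto simp: vec_mat_linear_aont_map linear_aont_map_vec_mat linear_aont_map_carrier
      vec_mat_M_carrier)

lemma array_entry_vec_mat [simp]:
  "y \<in> carrier_vec s \<Longrightarrow>
    array_entry s (linear_aont_map M) (vec_mat y M) c = (if c < s then vec_mat y M $ c else y $ (c - s))"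
  by (simp add: array_entry_def linear_aont_map_vec_mat)

lemma unbiased_iff_attained:
  assumes D: "D \<subseteq> {0..<2*s}"
  shows "unbiased s (linear_aont_map M) D \<longleftrightarrow>
    (\<forall>u. \<exists>y\<in>carrier_vec s. \<forall>c\<in>D. array_entry s (linear_aont_map M) (vec_mat y M) c = u c)"
proof -
  have additive: "array_entry s (linear_aont_map M) (x + y) c
      = array_entry s (linear_aont_map M) x c + array_entry s (linear_aont_map M) y c"
    if "x \<in> carrier_vec s" "y \<in> carrier_vec s" "c \<in> D" for x y c
    using that D M_inverse(1)
    by (auto simp: array_entry_def linear_aont_map_def vec_mat_add[of x "the (mat_inverse M)" y])
  have "unbiased s (linear_aont_map M) D \<longleftrightarrow>
      (\<forall>u. \<exists>x\<in>carrier_vec s. \<forall>c\<in>D. array_entry s (linear_aont_map M) x c = u c)"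
    using additive D by (intro unbiased_iff_surjective) (auto simp: finite_subset)
  also have "\<dots> \<longleftrightarrow>
      (\<forall>u. \<exists>y\<in>carrier_vec s. \<forall>c\<in>D. array_entry s (linear_aont_map M) (vec_mat y M) c = u c)"
    by (metis vec_mat_linear_aont_map linear_aont_map_carrier vec_mat_M_carrier)
  finally show ?thesis .
qed

lemma unbiased_inputs: "unbiased s (linear_aont_map M) {0..<s}"
proof -
  have "\<exists>y\<in>carrier_vec s. \<forall>c\<in>{0..<s}. array_entry s (linear_aont_map M) (vec_mat y M) c = u c" for u
    by (intro bexI[of _ "linear_aont_map M (vec s u)"])
      (auto simp: vec_mat_linear_aont_map linear_aont_map_carrier array_entry_def)
  then show ?thesis by (simp add: unbiased_iff_attained)
qed

lemma unbiased_outputs: "unbiased s (linear_aont_map M) {s..<2*s}"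
proof -
  have "\<exists>y\<in>carrier_vec s. \<forall>c\<in>{s..<2*s}. array_entry s (linear_aont_map M) (vec_mat y M) c = u c" for u
    by (intro bexI[of _ "vec s (\<lambda>j. u (j + s))"]) auto
  then show ?thesis by (simp add: unbiased_iff_attained)
qed

lemma unbiased_mixed_iff_attained:
  assumes I: "I \<subseteq> {0..<s}" and J: "J \<subseteq> {s..<2*s}"
  shows "unbiased s (linear_aont_map M) (I \<union> J) \<longleftrightarrow>
    (\<forall>u. \<exists>y\<in>carrier_vec s. (\<forall>i\<in>I. vec_mat y M $ i = u i) \<and> (\<forall>c\<in>J. y $ (c - s) = u c))"
proof -
  have IJ: "I \<union> J \<subseteq> {0..<2*s}" using I J by auto
  have in_I: "c < s" if "c \<in> I" for c using I that by auto
  have in_J: "\<not> c < s" if "c \<in> J" for c using J that by auto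
  have split: "(\<forall>c\<in>I \<union> J. array_entry s (linear_aont_map M) (vec_mat y M) c = u c) \<longleftrightarrow>
      (\<forall>i\<in>I. vec_mat y M $ i = u i) \<and> (\<forall>c\<in>J. y $ (c - s) = u c)" if "y \<in> carrier_vec s" for y u
    using that in_I in_J by auto
  show ?thesis
    unfolding unbiased_iff_attained[OF IJ] by (simp only: split cong: bex_cong)
qed

lemma vec_mat_supported_onto_if_unbiased_mixed:
  assumes I: "I \<subseteq> {0..<s}" and J: "J \<subseteq> {s..<2*s}"
    and unbiased: "unbiased s (linear_aont_map M) (I \<union> J)"
  shows "\<exists>z\<in>carrier_vec s. (\<forall>j<s. j \<notin> hidden_outputs s J \<longrightarrow> z $ j = 0)
    \<and> (\<forall>i\<in>I. vec_mat z M $ i = w i)"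
proof -
  obtain y where y: "y \<in> carrier_vec s" "\<forall>i\<in>I. vec_mat y M $ i = (if i < s then w i else 0)"
    "\<forall>c\<in>J. y $ (c - s) = (if c < s then w c else 0)"
    using unbiased[unfolded unbiased_mixed_iff_attained[OF I J], rule_format,
        of "\<lambda>c. if c < s then w c else 0"]
    by blast
  have "y $ j = 0" if "j < s" "j \<notin> hidden_outputs s J" for j
  proof -
    have "j + s \<in> J" using not_in_hidden_outputs_iff[OF J] that by blast
    then show ?thesis using bspec[OF y(3), of "j + s"] by simp
  qed
  moreover have "\<forall>i\<in>I. vec_mat y M $ i = w i" using y(2) I by fastforce
  ultimately show ?thesis using y(1) by blast
qed

lemma unbiased_mixed_if_vec_mat_supported_onto:
  assumes I: "I \<subseteq> {0..<s}" and J: "J \<subseteq> {s..<2*s}"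
    and onto: "\<forall>w. \<exists>z\<in>carrier_vec s. (\<forall>j<s. j \<notin> hidden_outputs s J \<longrightarrow> z $ j = 0)
      \<and> (\<forall>i\<in>I. vec_mat z M $ i = w i)"
  shows "unbiased s (linear_aont_map M) (I \<union> J)"
  unfolding unbiased_mixed_iff_attained[OF I J]
proof
  fix u :: "nat \<Rightarrow> 'a"
  \<comment> \<open>first match the outputs on \<open>J\<close>, then correct the inputs on \<open>I\<close> without changing them\<close>
  define y0 where "y0 = vec s (\<lambda>j. if j + s \<in> J then u (j + s) else 0)"
  obtain z where z: "z \<in> carrier_vec s" "\<forall>j<s. j \<notin> hidden_outputs s J \<longrightarrow> z $ j = 0"
    "\<forall>i\<in>I. vec_mat z M $ i = u i - vec_mat y0 M $ i"
    using onto[rule_format, of "\<lambda>i. u i - vec_mat y0 M $ i"] by blast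
  have "vec_mat (y0 + z) M = vec_mat y0 M + vec_mat z M"
    using z(1) M_carrier by (intro vec_mat_add) (auto simp: y0_def)
  then have "\<forall>i\<in>I. vec_mat (y0 + z) M $ i = u i"
    using z(3) I M_carrier by fastforce
  moreover have "(y0 + z) $ (c - s) = u c" if c: "c \<in> J" for c
  proof -
    have "s \<le> c" "c < 2 * s" using c J by auto
    then have "c - s < s" "c - s + s = c" by linarith+
    then have "z $ (c - s) = 0" using z(2) not_in_hidden_outputs_iff[OF J] c by metis
    then show ?thesis using z(1) c \<open>c - s < s\<close> \<open>c - s + s = c\<close> by (simp add: y0_def)
  qed
  ultimately show "\<exists>y\<in>carrier_vec s. (\<forall>i\<in>I. vec_mat y M $ i = u i) \<and> (\<forall>c\<in>J. y $ (c - s) = u c)"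
    using z(1) by (intro bexI[of _ "y0 + z"]) (auto simp: y0_def)
qed

lemma unbiased_mixed_iff_rank:
  assumes I: "I \<subseteq> {0..<s}" and J: "J \<subseteq> {s..<2*s}"
  shows "unbiased s (linear_aont_map M) (I \<union> J) \<longleftrightarrow>
    vec_space.rank (card (hidden_outputs s J)) (submatrix M (hidden_outputs s J) I) = card I"
proof -
  have R: "hidden_outputs s J \<subseteq> {0..<s}" unfolding hidden_outputs_def by blast
  note sub = submatrix_carrier_mat[OF M_carrier R I]
  have "unbiased s (linear_aont_map M) (I \<union> J) \<longleftrightarrow>
      (\<forall>w. \<exists>z\<in>carrier_vec s. (\<forall>j<s. j \<notin> hidden_outputs s J \<longrightarrow> z $ j = 0)
        \<and> (\<forall>i\<in>I. vec_mat z M $ i = w i))"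
    using vec_mat_supported_onto_if_unbiased_mixed[OF I J]
      unbiased_mixed_if_vec_mat_supported_onto[OF I J] by blast
  then show ?thesis
    unfolding rank_eq_dim_col_iff_kernel_trivial[OF sub]
      vec_mat_surjective_iff_kernel_trivial[OF sub, symmetric]
      vec_mat_submatrix_surjective_iff[OF M_carrier R I] .
qed

end

theorem mainTheorem4:
  fixes M :: "'a::{finite,field} mat" and s ti to :: nat
  assumes "M \<in> carrier_mat s s" and "invertible_mat M"
    and "1 \<le> ti" and "ti \<le> to" and "to \<le> s"
  shows "AONT ti to s (linear_aont_map M) \<longleftrightarrow>
    (\<forall>R C. R \<subseteq> {0..<s} \<longrightarrow> card R = to \<longrightarrow> C \<subseteq> {0..<s} \<longrightarrow> card C = ti \<longrightarrow>
       vec_space.rank to (submatrix M R C) = ti)"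
proof -
  interpret linear_aont M s using assms(1,2) by unfold_locales
  have reindex: "(\<forall>J. J \<subseteq> {s..<2*s} \<longrightarrow> card J = s - to \<longrightarrow>
        vec_space.rank to (submatrix M (hidden_outputs s J) I) = ti)
      \<longleftrightarrow> (\<forall>R. R \<subseteq> {0..<s} \<longrightarrow> card R = to \<longrightarrow> vec_space.rank to (submatrix M R I) = ti)"
    for I
    by (rule all_hidden_outputs_iff[OF assms(5), of "\<lambda>R. vec_space.rank to (submatrix M R I) = ti"])
  have "AONT ti to s (linear_aont_map M) \<longleftrightarrow>
      (\<forall>I. I \<subseteq> {0..<s} \<longrightarrow> card I = ti \<longrightarrow> (\<forall>J. J \<subseteq> {s..<2*s} \<longrightarrow> card J = s - to \<longrightarrow>
        vec_space.rank to (submatrix M (hidden_outputs s J) I) = ti))"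
    unfolding AONT_def using assms(5)
    by (simp add: bij_betw_linear_aont_map unbiased_inputs unbiased_outputs unbiased_mixed_iff_rank
        card_hidden_outputs)
  also have "\<dots> \<longleftrightarrow> (\<forall>I. I \<subseteq> {0..<s} \<longrightarrow> card I = ti \<longrightarrow> (\<forall>R. R \<subseteq> {0..<s} \<longrightarrow> card R = to \<longrightarrow>
        vec_space.rank to (submatrix M R I) = ti))"
    by (simp only: reindex)
  finally show ?thesis by blast
qed

end
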